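(* In the setting described in the context, $\mathcal{V}(X)<\infty$ for every $X\in\mathcal{K}(\mathbb{R}^n)$ with $X\cap\mathcal{D}_{\mathcal{A}}\neq\emptyset$.
   Context: Let $\|\cdot\|$ be a norm on $\mathbb{R}^n$ and $\mathrm{dist}(x,\Omega):=\inf_{y\in\Omega}\|x-y\|$. Let $\mathcal{K}(\mathbb{R}^n)$ denote the nonempty compact subsets of $\mathbb{R}^n$. Consider $x_{k+1}=f(x_k,u_k)$ with $f:\mathbb{R}^n\times\mathbb{R}^m\to\mathbb{R}^n$ continuous and inputs $u_k\in U$, $U\subset\mathbb{R}^m$ nonempty compact. For $x\in\mathbb{R}^n$ and $\pi:\mathbb{Z}_+\to U$, $\varphi_x^\pi(0)=x$, $\varphi_x^\pi(k+1)=f(\varphi_x^\pi(k),\pi(k))$; $\mathcal{R}(X,k):=\{\varphi_x^\pi(k):x\in X,\pi\in U^{\mathbb{Z}_+}\}$. Let $\mathcal{A}\in\mathcal{K}(\mathbb{R}^n)$ be controlled invariant. Assume local $\ell_p$-stabilizability: there exist $r>0$, $M\ge1$, $p>0$, $\lambda:[0,r]\times\mathbb{Z}_+\to\mathbb{R}_+$ such that (1) for each $k$, $s\mapsto\lambda(s,k)$ is continuous, nondecreasing, $\lambda(0,k)=0$; for each $s$, $k\mapsto\lambda(s,k)$ is nonincreasing, $\lambda(s,0)\le s$; (2) $\sum_{k}\lambda(r,k)^p<\infty$; (3) for every $x$ with $\mathrm{dist}(x,\mathcal{A})\le r$ there is $\pi\in U^{\mathbb{Z}_+}$ with $\mathrm{dist}(\varphi_x^\pi(k),\mathcal{A})\le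 M\lambda(\mathrm{dist}(x,\mathcal{A}),k)$ for all $k$. Let $\mathcal{D}_{\mathcal{A}}:=\{x:\exists\pi\in U^{\mathbb{Z}_+},\ \lim_{k\to\infty}\mathrm{dist}(\varphi_x^\pi(k),\mathcal{A})=0\}$. Let $\alpha:\mathbb{R}^n\to\mathbb{R}_+$ be continuous with $\underline{\alpha}\,\mathrm{dist}(x,\mathcal{A})^{\bar p}\le\alpha(x)\le\overline{\alpha}\,\mathrm{dist}(x,\mathcal{A})^{\bar p}$, constants $\underline{\alpha},\overline{\alpha}>0$, $\bar p\ge p$. Define $\Psi(X):=\inf_{y\in X}\alpha(y)$ and $\mathcal{V}(X):=\sum_{k=0}^\infty\Psi(\mathcal{R}(X,k))\in[0,\infty]$. *)

theory Defs
  imports "HOL-Analysis.Analysis"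
begin

definition is_norm :: "('a::euclidean_space \<Rightarrow> real) \<Rightarrow> bool" where
  "is_norm N \<longleftrightarrow> (\<forall>x. 0 \<le> N x) \<and> (\<forall>x. N x = 0 \<longleftrightarrow> x = 0)
     \<and> (\<forall>c x. N (scaleR c x) = \<bar>c\<bar> * N x) \<and> (\<forall>x y. N (x + y) \<le> N x + N y)"

definition setdist :: "('a::euclidean_space \<Rightarrow> real) \<Rightarrow> 'a \<Rightarrow> 'a set \<Rightarrow> real" where
  "setdist N x \<Omega> = (INF y\<in>\<Omega>. N (x - y))"

fun traj :: "('a \<Rightarrow> 'b \<Rightarrow> 'a) \<Rightarrow> 'a \<Rightarrow> (nat \<Rightarrow> 'b) \<Rightarrow> nat \<Rightarrow> 'a" where
  "traj f x \<pi> 0 = x"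
| "traj f x \<pi> (Suc k) = f (traj f x \<pi> k) (\<pi> k)"

definition reach :: "('a \<Rightarrow> 'b \<Rightarrow> 'a) \<Rightarrow> 'b set \<Rightarrow> 'a set \<Rightarrow> nat \<Rightarrow> 'a set" where
  "reach f U X k = {traj f x \<pi> k | x \<pi>. x \<in> X \<and> (\<forall>j. \<pi> j \<in> U)}"

definition controlled_invariant :: "('a \<Rightarrow> 'b \<Rightarrow> 'a) \<Rightarrow> 'b set \<Rightarrow> 'a set \<Rightarrow> bool" where
  "controlled_invariant f U A \<longleftrightarrow> (\<forall>x\<in>A. \<exists>u\<in>U. f x u \<in> A)"

definition local_lp_stabilizable_with ::
  "('a::euclidean_space \<Rightarrow> real) \<Rightarrow> ('a \<Rightarrow> 'b \<Rightarrow> 'a) \<Rightarrow> 'b set \<Rightarrow> 'a set \<Rightarrow> real \<Rightarrow> bool" where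
  "local_lp_stabilizable_with N f U A p \<longleftrightarrow>
    (\<exists>r M (lam :: real \<Rightarrow> nat \<Rightarrow> real). r > 0 \<and> M \<ge> 1 \<and> p > 0 \<and>
      (\<forall>s\<in>{0..r}. \<forall>k. 0 \<le> lam s k) \<and>
      (\<forall>k. continuous_on {0..r} (\<lambda>s. lam s k) \<and> mono_on {0..r} (\<lambda>s. lam s k) \<and> lam 0 k = 0) \<and>
      (\<forall>s\<in>{0..r}. antimono (lam s) \<and> lam s 0 \<le> s) \<and>
      summable (\<lambda>k. lam r k powr p) \<and>
      (\<forall>x. setdist N x A \<le> r \<longrightarrow>
         (\<exists>\<pi>. (\<forall>j. \<pi> j \<in> U) \<and>
            (\<forall>k. setdist N (traj f x \<pi> k) A \<le> M * lam (setdist N x A) k))))"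

definition domA :: "('a::euclidean_space \<Rightarrow> real) \<Rightarrow> ('a \<Rightarrow> 'b \<Rightarrow> 'a) \<Rightarrow> 'b set \<Rightarrow> 'a set \<Rightarrow> 'a set" where
  "domA N f U A = {x. \<exists>\<pi>. (\<forall>j. \<pi> j \<in> U) \<and> ((\<lambda>k. setdist N (traj f x \<pi> k) A) \<longlonglongrightarrow> 0)}"

definition Psi :: "('a \<Rightarrow> real) \<Rightarrow> 'a set \<Rightarrow> real" where
  "Psi \<alpha> X = (INF y\<in>X. \<alpha> y)"

definition Vfun :: "('a \<Rightarrow> real) \<Rightarrow> ('a \<Rightarrow> 'b \<Rightarrow> 'a) \<Rightarrow> 'b set \<Rightarrow> 'a set \<Rightarrow> ennreal" where
  "Vfun \<alpha> f U X = (\<Sum>k. ennreal (Psi \<alpha> (reach f U X k)))"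

end

theory Submission
  imports Defs
begin

(* Pick x in X \<inter> D_A. An admissible control steers x into the r-neighbourhood of A, after
   which the stabilizing control keeps dist(\<phi>(k), A) <= M \<lambda>(r,k). Along the concatenated
   trajectory \<alpha> <= ahi (M \<lambda>(r,k))^pbar, which is summable because \<lambda>(r,k) -> 0 and
   pbar >= p, and \<Psi>(R(X,k)) is at most \<alpha> at the k-th point of that trajectory. *)

lemma traj_cong_prefix:
  "(\<And>j. j < K \<Longrightarrow> \<pi> j = \<sigma> j) \<Longrightarrow> k \<le> K \<Longrightarrow> traj f x \<pi> k = traj f x \<sigma> k"
  by (induction k) auto

lemma traj_append:
  "traj f x (\<lambda>j. if j < K then \<pi> j else \<sigma> (j - K)) (K + k) = traj f (traj f x \<pi> K) \<sigma> k"
proof (induction k)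
  case 0
  show ?case
    by (simp only: add_0_right traj.simps(1)) (rule traj_cong_prefix[where K = K], auto)
next
  case (Suc k)
  then show ?case by simp
qed

lemma setdist_nonneg:
  assumes "is_norm N" "A \<noteq> {}"
  shows "0 \<le> setdist N x A"
  unfolding setdist_def using assms
  by (intro cINF_greatest) (auto simp: is_norm_def)

lemma summable_powr_mono_exponent:
  fixes g :: "nat \<Rightarrow> real"
  assumes g0: "\<And>k. 0 \<le> g k" and summable: "summable (\<lambda>k. g k powr p)"
    and "p > 0" and "p \<le> q"
  shows "summable (\<lambda>k. g k powr q)"
proof -
  have "eventually (\<lambda>k. g k powr p < 1) sequentially"
    using order_tendstoD(2)[OF summable_LIMSEQ_zero[OF summable]] by simp
  then have "eventually (\<lambda>k. norm (g k powr q) \<le> g k powr p) sequentially"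
  proof eventually_elim
    case (elim k)
    have "g k \<le> 1"
    proof (rule ccontr)
      assume "\<not> g k \<le> 1"
      then have "1 powr p < g k powr p"
        using \<open>p > 0\<close> by (intro powr_less_mono2) auto
      with elim show False
        by simp
    qed
    then show ?case
      using powr_mono'[OF \<open>p \<le> q\<close> g0[of k]] by simp
  qed
  then show ?thesis
    using summable by (rule summable_comparison_test_ev)
qed

lemma local_lp_stabilizable_uniform_bound:
  assumes "is_norm N" "A \<noteq> {}" "local_lp_stabilizable_with N f U A p"
  obtains r b where "r > 0" "p > 0" "\<And>k. 0 \<le> b k" "summable (\<lambda>k. b k powr p)"
    "\<And>y. setdist N y A \<le> r \<Longrightarrow>
       \<exists>\<pi>. (\<forall>j. \<pi> j \<in> U) \<and> (\<forall>k. setdist N (traj f y \<pi> k) A \<le> b k)"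
proof -
  obtain r M lam where "r > 0" "M \<ge> 1" "p > 0"
    and lam_nonneg: "\<forall>s\<in>{0..r}. \<forall>k. 0 \<le> lam s k"
    and lam_mono: "\<forall>k. mono_on {0..r} (\<lambda>s. lam s k)"
    and lam_summable: "summable (\<lambda>k. lam r k powr p)"
    and stab: "\<forall>x. setdist N x A \<le> r \<longrightarrow>
         (\<exists>\<pi>. (\<forall>j. \<pi> j \<in> U) \<and> (\<forall>k. setdist N (traj f x \<pi> k) A \<le> M * lam (setdist N x A) k))"
    using assms(3) unfolding local_lp_stabilizable_with_def by metis
  have bound_nonneg: "0 \<le> M * lam r k" for k
    using lam_nonneg \<open>r > 0\<close> \<open>M \<ge> 1\<close> by auto
  have "summable (\<lambda>k. M powr p * lam r k powr p)"
    using lam_summable by (rule summable_mult)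
  then have summable: "summable (\<lambda>k. (M * lam r k) powr p)"
    using lam_nonneg \<open>r > 0\<close> \<open>M \<ge> 1\<close> by (simp add: powr_mult)
  have "\<exists>\<pi>. (\<forall>j. \<pi> j \<in> U) \<and> (\<forall>k. setdist N (traj f y \<pi> k) A \<le> M * lam r k)"
    if y_near: "setdist N y A \<le> r" for y
  proof -
    obtain \<pi> where "\<forall>j. \<pi> j \<in> U"
      and \<pi>: "\<forall>k. setdist N (traj f y \<pi> k) A \<le> M * lam (setdist N y A) k"
      using stab y_near by blast
    have "lam (setdist N y A) k \<le> lam r k" for k
      using lam_mono y_near setdist_nonneg[OF assms(1,2)] \<open>r > 0\<close> by (auto simp: mono_on_def)
    then have "setdist N (traj f y \<pi> k) A \<le> M * lam r k" for k
      using \<pi> \<open>M \<ge> 1\<close> by (meson mult_left_mono order_trans zero_le_one)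
    then show ?thesis
      using \<open>\<forall>j. \<pi> j \<in> U\<close> by blast
  qed
  then show ?thesis
    using that[OF \<open>r > 0\<close> \<open>p > 0\<close> bound_nonneg summable] by blast
qed

lemma local_lp_stabilizable_summable_cost:
  assumes "is_norm N" "A \<noteq> {}" "local_lp_stabilizable_with N f U A p" "p \<le> q" "0 \<le> c"
    and \<alpha>_nonneg: "\<And>x. 0 \<le> \<alpha> x" and \<alpha>_le: "\<And>x. \<alpha> x \<le> c * setdist N x A powr q"
  obtains r where "r > 0"
    "\<And>y. setdist N y A \<le> r \<Longrightarrow> \<exists>\<pi>. (\<forall>j. \<pi> j \<in> U) \<and> summable (\<lambda>k. \<alpha> (traj f y \<pi> k))"
proof -
  obtain r b where "r > 0" "p > 0" and b_nonneg: "\<And>k. 0 \<le> b k"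
    and b_summable: "summable (\<lambda>k. b k powr p)"
    and stab: "\<And>y. setdist N y A \<le> r \<Longrightarrow>
       \<exists>\<pi>. (\<forall>j. \<pi> j \<in> U) \<and> (\<forall>k. setdist N (traj f y \<pi> k) A \<le> b k)"
    using local_lp_stabilizable_uniform_bound[OF assms(1-3)] by blast
  have cost_summable: "summable (\<lambda>k. c * b k powr q)"
    using summable_powr_mono_exponent[OF b_nonneg b_summable \<open>p > 0\<close> \<open>p \<le> q\<close>]
    by (rule summable_mult)
  show ?thesis
  proof (rule that[OF \<open>r > 0\<close>])
    fix y
    assume "setdist N y A \<le> r"
    then obtain \<pi> where "\<forall>j. \<pi> j \<in> U" and \<pi>: "\<forall>k. setdist N (traj f y \<pi> k) A \<le> b k"
      using stab by blast
    have "norm (\<alpha> (traj f y \<pi> k)) \<le> c * b k powr q" for k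
    proof -
      have "setdist N (traj f y \<pi> k) A powr q \<le> b k powr q"
        using \<pi> \<open>p > 0\<close> \<open>p \<le> q\<close> setdist_nonneg[OF assms(1,2)] by (intro powr_mono2) auto
      then show ?thesis
        using \<alpha>_le[of "traj f y \<pi> k"] \<alpha>_nonneg \<open>0 \<le> c\<close> by (simp add: mult_left_mono order_trans)
    qed
    then have "summable (\<lambda>k. \<alpha> (traj f y \<pi> k))"
      by (rule summable_comparison_test'[OF cost_summable])
    then show "\<exists>\<pi>. (\<forall>j. \<pi> j \<in> U) \<and> summable (\<lambda>k. \<alpha> (traj f y \<pi> k))"
      using \<open>\<forall>j. \<pi> j \<in> U\<close> by blast
  qed
qed

lemma domA_summable_cost:
  fixes g :: "'a::euclidean_space \<Rightarrow> 'c::real_normed_vector"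
  assumes "x \<in> domA N f U A" "r > 0"
    and near: "\<And>y. setdist N y A \<le> r \<Longrightarrow> \<exists>\<pi>. (\<forall>j. \<pi> j \<in> U) \<and> summable (\<lambda>k. g (traj f y \<pi> k))"
  obtains \<pi> where "\<forall>j. \<pi> j \<in> U" "summable (\<lambda>k. g (traj f x \<pi> k))"
proof -
  obtain \<pi>0 where "\<forall>j. \<pi>0 j \<in> U" and "(\<lambda>k. setdist N (traj f x \<pi>0 k) A) \<longlonglongrightarrow> 0"
    using assms(1) unfolding domA_def by blast
  then obtain K where "setdist N (traj f x \<pi>0 K) A < r"
    using \<open>r > 0\<close> by (metis eventually_sequentially order_refl order_tendstoD(2))
  then obtain \<sigma> where "\<forall>j. \<sigma> j \<in> U" and "summable (\<lambda>k. g (traj f (traj f x \<pi>0 K) \<sigma> k))"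
    using near by force
  define \<pi> where "\<pi> = (\<lambda>j. if j < K then \<pi>0 j else \<sigma> (j - K))"
  have "summable (\<lambda>k. g (traj f x \<pi> (k + K)))"
    using \<open>summable (\<lambda>k. g (traj f (traj f x \<pi>0 K) \<sigma> k))\<close>
    by (simp add: \<pi>_def add.commute[of _ K] traj_append)
  then have "summable (\<lambda>k. g (traj f x \<pi> k))"
    by (rule summable_iff_shift[where f = "\<lambda>k. g (traj f x \<pi> k)", THEN iffD1])
  moreover have "\<forall>j. \<pi> j \<in> U"
    using \<open>\<forall>j. \<pi>0 j \<in> U\<close> \<open>\<forall>j. \<sigma> j \<in> U\<close> by (simp add: \<pi>_def)
  ultimately show ?thesis
    using that by blast
qed

lemma Psi_reach_le_traj:
  assumes "\<And>y. 0 \<le> \<alpha> y" "x \<in> X" "\<forall>j. \<pi> j \<in> U"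
  shows "Psi \<alpha> (reach f U X k) \<le> \<alpha> (traj f x \<pi> k)"
  unfolding Psi_def reach_def using assms
  by (intro cINF_lower bdd_belowI[where m = 0]) auto

lemma Psi_reach_nonneg:
  assumes "\<And>y. 0 \<le> \<alpha> y" "x \<in> X" "\<forall>j. \<pi> j \<in> U"
  shows "0 \<le> Psi \<alpha> (reach f U X k)"
  unfolding Psi_def reach_def using assms
  by (intro cINF_greatest) blast+

lemma Vfun_finite_if_summable_traj:
  assumes "\<And>y. 0 \<le> \<alpha> y" "x \<in> X" "\<forall>j. \<pi> j \<in> U"
    and "summable (\<lambda>k. \<alpha> (traj f x \<pi> k))"
  shows "Vfun \<alpha> f U X < \<infinity>"
proof -
  have Psi_le: "norm (Psi \<alpha> (reach f U X k)) \<le> \<alpha> (traj f x \<pi> k)" for k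
    using Psi_reach_le_traj[OF assms(1-3)] Psi_reach_nonneg[OF assms(1-3)] by simp
  have summable: "summable (\<lambda>k. Psi \<alpha> (reach f U X k))"
    by (rule summable_comparison_test'[OF assms(4) Psi_le])
  have "Vfun \<alpha> f U X = ennreal (\<Sum>k. Psi \<alpha> (reach f U X k))"
    unfolding Vfun_def using suminf_ennreal2[OF Psi_reach_nonneg[OF assms(1-3)] summable] by simp
  then show ?thesis
    by simp
qed

theorem lemma5:
  fixes N :: "'a::euclidean_space \<Rightarrow> real"
    and f :: "'a \<Rightarrow> 'b::euclidean_space \<Rightarrow> 'a"
    and U :: "'b set" and A :: "'a set" and \<alpha> :: "'a \<Rightarrow> real"
    and p pbar alo ahi :: real and X :: "'a set"
  assumes "is_norm N"
    and "continuous_on UNIV (\<lambda>(x, u). f x u)"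
    and "compact U" "U \<noteq> {}"
    and "compact A" "A \<noteq> {}"
    and "controlled_invariant f U A"
    and "local_lp_stabilizable_with N f U A p"
    and "continuous_on UNIV \<alpha>"
    and "\<forall>x. 0 \<le> \<alpha> x"
    and "alo > 0" "ahi > 0" "pbar \<ge> p"
    and "\<forall>x. alo * setdist N x A powr pbar \<le> \<alpha> x \<and> \<alpha> x \<le> ahi * setdist N x A powr pbar"
    and "compact X" "X \<noteq> {}"
    and "X \<inter> domA N f U A \<noteq> {}"
  shows "Vfun \<alpha> f U X < \<infinity>"
proof -
  have \<alpha>_le: "\<And>x. \<alpha> x \<le> ahi * setdist N x A powr pbar"
    using assms(14) by blast
  obtain r where "r > 0" and near:
    "\<And>y. setdist N y A \<le> r \<Longrightarrow> \<exists>\<pi>. (\<forall>j. \<pi> j \<in> U) \<and> summable (\<lambda>k. \<alpha> (traj f y \<pi> k))"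
    using local_lp_stabilizable_summable_cost[OF assms(1,6,8,13) less_imp_le[OF assms(12)]]
      assms(10) \<alpha>_le by metis
  obtain x where "x \<in> X" "x \<in> domA N f U A"
    using assms(17) by blast
  obtain \<pi> where "\<forall>j. \<pi> j \<in> U" "summable (\<lambda>k. \<alpha> (traj f x \<pi> k))"
    using domA_summable_cost[OF \<open>x \<in> domA N f U A\<close> \<open>r > 0\<close> near] by blast
  then show ?thesis
    using Vfun_finite_if_summable_traj[OF _ \<open>x \<in> X\<close>] assms(10) by blast
qed

end
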